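(* Let $r_0$ solve $r_0'=r_0\mathcal N(r_0^2)$, $r_0(0)=\frac12$, and set $\mathcal N_0=\mathcal N(r_0^2)$ and $\mathcal N_p=\mathcal N'(r_0^2)r_0^2$. Define the real potential $$\mathcal V(x)=\big[\mathcal N_0(x)+\mathcal N_p(x)\big]_x+\big[\mathcal N_0(x)+\mathcal N_p(x)\big]^2.$$ Assume $\lambda\in\mathbb C$ and $0\ne B=(U,V)\in L^2(\mathbb R;\mathbb C^2)$ satisfy $$U_x=(\mathcal N_0+\mathcal N_p)U+\lambda V,\qquad V_x=\lambda U-(\mathcal N_0+\mathcal N_p)V.$$ Then: (i) $-\lambda^2\in\mathbb R$, and $(\mathcal E,U)=(-\lambda^2,U)$, with $0\ne U\in L^2$, is an eigenpair of $-\partial_x^2+\mathcal V(x)$, i.e. $(-\partial_x^2+\mathcal V)U=\mathcal EU$. (ii) $\mathcal E=0$ is the ground state energy (lowest eigenvalue) of $-\partial_x^2+\mathcal V(x)$.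
   Context: Nonlinearity: $\mathcal N:[0,\infty)\to\mathbb R$ is smooth, $\mathcal N'(s)<0$ for $s>0$, $\mathcal N(0)=1$, $\mathcal N(1)=0$, $\lim_{s\to\infty}\mathcal N(s)\in[-\infty,0)$, and $K:=-\mathcal N'(1)>0$. The function $r_0$ increases from $0$ at $-\infty$ to $1$ at $+\infty$. *)

theory Defs
  imports "HOL-Analysis.Analysis"
begin

definition smooth_on_real :: "real set \<Rightarrow> (real \<Rightarrow> real) \<Rightarrow> bool" where
  "smooth_on_real S f \<longleftrightarrow>
     (\<exists>D :: nat \<Rightarrow> real \<Rightarrow> real. D 0 = f \<and>
        (\<forall>k. \<forall>x\<in>S. (D k has_real_derivative D (Suc k) x) (at x within S)))"

definition L2_fun :: "(real \<Rightarrow> complex) \<Rightarrow> bool" where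
  "L2_fun u \<longleftrightarrow> u \<in> borel_measurable lborel \<and> integrable lborel (\<lambda>x. (cmod (u x))\<^sup>2)"

definition schrod_eigenpair :: "(real \<Rightarrow> real) \<Rightarrow> complex \<Rightarrow> (real \<Rightarrow> complex) \<Rightarrow> bool" where
  "schrod_eigenpair V E u \<longleftrightarrow>
     L2_fun u \<and> (\<exists>x. u x \<noteq> 0) \<and>
     (\<exists>u' u''. \<forall>x. (u has_vector_derivative u' x) (at x) \<and>
                    (u' has_vector_derivative u'' x) (at x) \<and>
                    - u'' x + complex_of_real (V x) * u x = E * u x)"

definition schrod_eigenvalue :: "(real \<Rightarrow> real) \<Rightarrow> complex \<Rightarrow> bool" where
  "schrod_eigenvalue V E \<longleftrightarrow> (\<exists>u. schrod_eigenpair V E u)"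

end

theory Submission
  imports Defs
begin

text \<open>
  With A = d/dx - W and W = N(r0^2) + N'(r0^2) r0^2, the operator -d^2/dx^2 + W' + W^2 is A* A.
  Since r0^2 stays in (0,1), W is bounded. The zero mode u0 = sqrt (r0^2 N(r0^2)) of A satisfies
  u0' = W u0 and is square integrable, since u0^2 is the derivative of the bounded increasing
  function r0^2/2; so 0 is an eigenvalue.

  Eigenfunctions are only assumed square integrable, so instead of integrating by parts we use the
  flux h = cnj u (W u - u'), whose derivative is E |u|^2 - |W u - u'|^2. If |h| stayed above some
  c > 0 on a half-line, then Re h = W |u|^2 - (|u|^2)'/2 would tend to -infinity there, and
  integrating (|u|^2)' >= 2 - 2 sup |W| |u|^2 would make |u|^2 unbounded, contradicting
  integrability. Hence every nondecreasing function dominated by |h| vanishes; applied to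
  sgn (Im E) Im h and to -Re h this gives Im E = 0 and Re E >= 0.

  Eliminating V from the first-order system shows that U solves the eigenvalue equation with
  E = -lam^2. If U vanished identically, then lam = 0 and V' = -W V, so V u0 would be a nonzero
  constant and |V| >= |V u0| would not be square integrable.
\<close>

lemma integrable_not_eventually_ge:
  fixes g :: "real \<Rightarrow> real"
  assumes g: "g integrable_on UNIV" "\<And>x. 0 \<le> g x" and \<delta>: "0 < \<delta>"
  shows "\<not> eventually (\<lambda>x. \<delta> \<le> g x) at_top"
proof
  assume "eventually (\<lambda>x. \<delta> \<le> g x) at_top"
  then obtain b where b: "\<And>x. b \<le> x \<Longrightarrow> \<delta> \<le> g x"
    by (auto simp: eventually_at_top_linorder)
  obtain n :: nat where n: "integral UNIV g < real n * \<delta>"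
    using reals_Archimedean3[OF \<delta>] by blast
  have gi: "g integrable_on {b..b + real n}"
    by (rule integrable_on_subinterval[OF g(1)]) auto
  have "real n * \<delta> = integral {b..b + real n} (\<lambda>x. \<delta>)"
    by simp
  also have "\<dots> \<le> integral {b..b + real n} g"
    by (rule integral_le) (auto simp: gi b)
  also have "\<dots> \<le> integral UNIV g"
    by (rule integral_subset_le) (auto simp: gi g)
  finally show False
    using n by simp
qed

lemma eventually_le_if_deriv_le_integrable:
  fixes f f' g :: "real \<Rightarrow> real"
  assumes f: "\<And>x. (f has_real_derivative f' x) (at x)"
    and g: "g integrable_on UNIV" "\<And>x. 0 \<le> g x"
    and K: "0 \<le> K" and a: "0 < a"
    and f'_le: "eventually (\<lambda>x. f' x \<le> K * g x - a) at_top"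
  shows "eventually (\<lambda>x. f x \<le> C) at_top"
proof -
  obtain b where b: "\<And>x. b \<le> x \<Longrightarrow> f' x \<le> K * g x - a"
    using f'_le by (auto simp: eventually_at_top_linorder)
  define I where "I = integral UNIV g"
  have bound: "f x \<le> f b + K * I - a * (x - b)" if "b \<le> x" for x
  proof -
    have "(f' has_integral f x - f b) {b..x}"
      using that f by (intro fundamental_theorem_of_calculus)
        (auto simp: has_real_derivative_iff_has_vector_derivative[symmetric]
          intro: has_field_derivative_at_within)
    moreover have gi: "g integrable_on {b..x}"
      by (rule integrable_on_subinterval[OF g(1)]) auto
    then have "((\<lambda>t. K * g t - a) has_integral K * integral {b..x} g - a * (x - b)) {b..x}"
      using that has_integral_const_real[of a b x]
      by (intro has_integral_diff has_integral_mult_right integrable_integral) (auto simp: mult.commute)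
    ultimately have "f x - f b \<le> K * integral {b..x} g - a * (x - b)"
      by (rule has_integral_le) (simp add: b)
    moreover have "integral {b..x} g \<le> I"
      unfolding I_def by (rule integral_subset_le) (auto simp: gi g)
    ultimately show ?thesis
      using mult_left_mono[OF _ K] by fastforce
  qed
  have "f x \<le> C" if "max b (b + (f b + K * I - C) / a) \<le> x" for x
  proof -
    have "f b + K * I - C \<le> a * (x - b)"
      using that a by (simp add: field_simps)
    then show ?thesis
      using bound[of x] that by simp
  qed
  then show ?thesis
    unfolding eventually_at_top_linorder by blast
qed

lemma at_within_atLeast_neq_bot:
  assumes "a \<le> (s::real)"
  shows "at s within {a..} \<noteq> bot"
proof
  assume "at s within {a..} = bot"
  moreover have "at_right s \<le> at s within {a..}"
    using assms by (intro at_le) auto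
  ultimately show False
    using trivial_limit_at_right_real[of s] bot_unique by metis
qed

lemma smooth_on_real_deriv:
  assumes f: "smooth_on_real {a..} f"
    and f': "\<And>s. a \<le> s \<Longrightarrow> (f has_real_derivative f' s) (at s within {a..})"
  shows "smooth_on_real {a..} f'"
proof -
  obtain D where D0: "D 0 = f"
    and D: "\<And>k s. a \<le> s \<Longrightarrow> (D k has_real_derivative D (Suc k) s) (at s within {a..})"
    using f unfolding smooth_on_real_def by auto
  have f'_eq: "f' s = D 1 s" if "a \<le> s" for s
    using that D[of s 0] f'[OF that] D0 at_within_atLeast_neq_bot[OF that]
    by (auto intro: has_field_derivative_unique)
  define D' where "D' k = (if k = 0 then f' else D (Suc k))" for k
  have "(D' k has_real_derivative D' (Suc k) s) (at s within {a..})" if "a \<le> s" for k s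
  proof (cases k)
    case 0
    show ?thesis
      using D[OF that, of 1] that f'_eq 0 unfolding D'_def
      by (auto intro: has_field_derivative_transform_within[where d = 1])
  next
    case (Suc k)
    then show ?thesis
      using D[OF that] unfolding D'_def by simp
  qed
  then show ?thesis
    unfolding smooth_on_real_def by (intro exI[of _ D']) (auto simp: D'_def)
qed

lemma continuous_on_difference_quotient:
  fixes f :: "real \<Rightarrow> real"
  assumes f: "continuous_on S f" and f': "(f has_real_derivative f' c) (at c within S)"
  shows "continuous_on S (\<lambda>s. if s = c then f' c else (f s - f c) / (s - c))"
    (is "continuous_on S ?q")
proof (clarsimp simp: continuous_on_eq_continuous_within)
  fix s assume s: "s \<in> S"
  show "continuous (at s within S) ?q"
  proof (cases "s = c")
    case True
    have "((\<lambda>y. (f y - f c) / (y - c)) \<longlongrightarrow> f' c) (at c within S)"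
      using f' by (simp add: has_field_derivative_iff)
    then have "(?q \<longlongrightarrow> f' c) (at c within S)"
      by (rule Lim_transform_eventually) (simp add: eventually_at_filter)
    then show ?thesis
      using True by (simp add: continuous_within)
  next
    case False
    have "continuous (at s within S) (\<lambda>y. (f y - f c) / (y - c))"
      using f s False by (auto intro!: continuous_intros simp: continuous_on_eq_continuous_within)
    then show ?thesis
      by (rule continuous_transform_within[of _ _ _ "\<bar>s - c\<bar>"])
        (use False s in \<open>auto simp: dist_real_def\<close>)
  qed
qed

lemma linear_ode_pos:
  fixes y a :: "real \<Rightarrow> real"
  assumes y: "\<And>x. (y has_real_derivative a x * y x) (at x)"
    and a: "continuous_on UNIV a" and y0: "0 < y x0"
  shows "0 < y x"
proof -
  define I where "I = {-(\<bar>x\<bar> + \<bar>x0\<bar>)..\<bar>x\<bar> + \<bar>x0\<bar>}"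
  obtain A where A: "\<And>t. t \<in> I \<Longrightarrow> (A has_real_derivative a t) (at t within I)"
    using antiderivative_continuous[OF continuous_on_subset[OF a]]
    unfolding I_def has_real_derivative_iff_has_vector_derivative by blast
  have "((\<lambda>t. y t * exp (- A t)) has_real_derivative 0) (at t within I)" if "t \<in> I" for t
    using A[OF that]
    by (auto intro!: derivative_eq_intros has_field_derivative_at_within[OF y] simp: algebra_simps)
  then obtain C where "\<And>t. t \<in> I \<Longrightarrow> y t * exp (- A t) = C"
    using has_derivative_zero_constant[of I "\<lambda>t. y t * exp (- A t)"]
    by (auto simp: I_def has_field_derivative_def lambda_zero)
  moreover have "x \<in> I" "x0 \<in> I"
    by (auto simp: I_def)
  ultimately have "y x * exp (- A x) = y x0 * exp (- A x0)"
    by metis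
  then show ?thesis
    using y0 by (metis exp_gt_zero mult_pos_pos zero_less_mult_pos2)
qed

lemma integrable_nonneg_deriv_of_bounded:
  fixes F f :: "real \<Rightarrow> real"
  assumes F: "\<And>x. (F has_real_derivative f x) (at x)"
    and f: "\<And>x. 0 \<le> f x" "continuous_on UNIV f"
    and B: "\<And>x. \<bar>F x\<bar> \<le> B"
  shows "integrable lborel f"
proof -
  have mono: "F x \<le> F y" if "x \<le> y" for x y
    using DERIV_nonneg_imp_nondecreasing[OF that] F f by blast
  have "- B \<le> F x" "F x \<le> B" for x
    using B[of x] by auto
  then have bdd: "bdd_above (range F)" "bdd_below (range F)"
    by (auto intro!: bdd_aboveI[of _ B] bdd_belowI[of _ "- B"])
  have "(F \<longlongrightarrow> (SUP x. F x)) at_top"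
  proof (rule order_tendstoI)
    fix l assume "l < (SUP x. F x)"
    then obtain x where "l < F x"
      using less_cSUP_iff[OF _ bdd(1)] by auto
    then show "eventually (\<lambda>y. l < F y) at_top"
      using mono by (auto simp: eventually_at_top_linorder intro: less_le_trans)
  next
    fix l assume "(SUP x. F x) < l"
    then show "eventually (\<lambda>y. F y < l) at_top"
      using cSUP_upper[OF _ bdd(1)] by (intro always_eventually) (meson UNIV_I le_less_trans)
  qed
  moreover have "(F \<longlongrightarrow> (INF x. F x)) at_bot"
  proof (rule order_tendstoI)
    fix l assume "(INF x. F x) < l"
    then obtain x where "F x < l"
      using cINF_less_iff[OF _ bdd(2)] by auto
    then show "eventually (\<lambda>y. F y < l) at_bot"
      using mono by (auto simp: eventually_at_bot_linorder intro: le_less_trans)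
  next
    fix l assume "l < (INF x. F x)"
    then show "eventually (\<lambda>y. l < F y) at_bot"
      using cINF_lower[OF bdd(2)] by (intro always_eventually) (meson UNIV_I less_le_trans)
  qed
  ultimately have "set_integrable lborel (einterval (-\<infinity>) \<infinity>) f"
    using F f by (intro interval_integral_FTC_nonneg(1)[where F = F])
      (auto simp: ereal_tendsto_simps1 continuous_on_eq_continuous_at)
  then show ?thesis
    by (simp add: set_integrable_def einterval_eq_UNIV)
qed

locale superpotential =
  fixes W W' :: "real \<Rightarrow> real" and M :: real
  assumes W_deriv: "\<And>x. (W has_real_derivative W' x) (at x)"
    and W_bounded: "\<And>x. \<bar>W x\<bar> \<le> M"
begin

definition potential :: "real \<Rightarrow> real"
  where "potential x = W' x + (W x)\<^sup>2"

lemma deriv_W: "deriv W = W'"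
  using W_deriv by (auto intro: DERIV_imp_deriv)

lemma M_nonneg: "0 \<le> M"
  using W_bounded[of 0] by simp

end

locale superpotential_eigenfunction = superpotential +
  fixes E :: complex and u u' u'' :: "real \<Rightarrow> complex"
  assumes u_deriv: "\<And>x. (u has_vector_derivative u' x) (at x)"
    and u'_deriv: "\<And>x. (u' has_vector_derivative u'' x) (at x)"
    and eigen_eq: "\<And>x. - u'' x + of_real (potential x) * u x = E * u x"
    and u_L2: "integrable lborel (\<lambda>x. (cmod (u x))\<^sup>2)"
begin

definition flux :: "real \<Rightarrow> complex"
  where "flux x = cnj (u x) * (of_real (W x) * u x - u' x)"

lemma flux_deriv:
  "(flux has_vector_derivative
      E * of_real ((cmod (u x))\<^sup>2) - of_real ((cmod (of_real (W x) * u x - u' x))\<^sup>2)) (at x)"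
proof -
  have u''_eq: "u'' x = (of_real (W' x + (W x)\<^sup>2) - E) * u x"
    using eigen_eq[of x] by (simp add: potential_def algebra_simps)
  have "(flux has_vector_derivative
      cnj (u x) * (of_real (W x) * u' x + of_real (W' x) * u x - u'' x)
      + cnj (u' x) * (of_real (W x) * u x - u' x)) (at x)"
    unfolding flux_def[abs_def]
    by (intro has_vector_derivative_mult has_vector_derivative_cnj has_vector_derivative_diff
        has_vector_derivative_of_real W_deriv u_deriv u'_deriv)
  moreover have "cnj (u x) * (of_real (W x) * u' x + of_real (W' x) * u x - u'' x)
      + cnj (u' x) * (of_real (W x) * u x - u' x)
      = E * of_real ((cmod (u x))\<^sup>2) - of_real ((cmod (of_real (W x) * u x - u' x))\<^sup>2)"
    unfolding complex_norm_square u''_eq by (simp add: algebra_simps power2_eq_square)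
  ultimately show ?thesis
    by simp
qed

lemma flux_not_eventually_ge_at_top:
  assumes c: "0 < c"
  shows "\<not> eventually (\<lambda>x. c \<le> cmod (flux x)) at_top"
proof
  assume flux_ge: "eventually (\<lambda>x. c \<le> cmod (flux x)) at_top"
  define g where "g x = (cmod (u x))\<^sup>2" for x
  define w where "w x = of_real (W x) * u x - u' x" for x
  have g_nonneg: "0 \<le> g x" for x
    by (simp add: g_def)
  have g_integrable: "g integrable_on UNIV"
    using integrable_on_lborel[OF u_L2] unfolding g_def .
  have g_deriv: "(g has_real_derivative 2 * Re (cnj (u x) * u' x)) (at x)" for x
  proof -
    have "((\<lambda>x. Re (cnj (u x) * u x)) has_real_derivative
        Re (cnj (u x) * u' x + cnj (u' x) * u x)) (at x)"
      by (intro has_field_derivative_Re has_vector_derivative_mult has_vector_derivative_cnj u_deriv)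
    moreover have "(\<lambda>x. Re (cnj (u x) * u x)) = g"
      by (auto simp: g_def fun_eq_iff cmod_power2 complex_mult_cnj mult.commute)
    ultimately show ?thesis
      by (simp add: mult.commute)
  qed
  have Re_flux: "Re (flux x) = W x * g x - Re (cnj (u x) * u' x)" for x
    unfolding g_def cmod_power2 by (simp add: flux_def algebra_simps power2_eq_square)
  have Re_flux_deriv: "((\<lambda>x. Re (flux x)) has_real_derivative Re E * g x - (cmod (w x))\<^sup>2) (at x)"
    for x
    using has_field_derivative_Re[OF flux_deriv[of x]] by (simp add: g_def w_def)
  have "eventually (\<lambda>x. Re E * g x - (cmod (w x))\<^sup>2 \<le> (\<bar>Re E\<bar> + c\<^sup>2) * g x - 2 * c\<^sup>2) at_top"
    using flux_ge
  proof eventually_elim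
    case (elim x)
    have "c \<le> cmod (u x) * cmod (w x)"
      using elim by (simp add: flux_def w_def norm_mult)
    then have "2 * c * c \<le> 2 * c * (cmod (u x) * cmod (w x))"
      using c by simp
    also have "\<dots> \<le> (cmod (w x))\<^sup>2 + c\<^sup>2 * g x"
      using sum_squares_ge_zero[of "cmod (w x) - c * cmod (u x)" 0]
      by (simp add: g_def power2_eq_square algebra_simps)
    finally show ?case
      using abs_ge_self[of "Re E"] mult_right_mono[of "Re E" "\<bar>Re E\<bar>" "g x"]
      by (simp add: g_def power2_eq_square algebra_simps)
  qed
  then have "eventually (\<lambda>x. Re (flux x) \<le> -1) at_top"
    using Re_flux_deriv c g_integrable g_nonneg by (intro eventually_le_if_deriv_le_integrable) auto
  then have "eventually (\<lambda>x. - (2 * Re (cnj (u x) * u' x)) \<le> 2 * M * g x - 2) at_top"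
  proof eventually_elim
    case (elim x)
    have "- W x * g x \<le> M * g x"
      using W_bounded[of x] g_nonneg by (intro mult_right_mono) auto
    then show ?case
      using elim Re_flux[of x] by simp
  qed
  then have "eventually (\<lambda>x. - g x \<le> -1) at_top"
    using DERIV_minus[OF g_deriv] g_integrable g_nonneg M_nonneg
    by (intro eventually_le_if_deriv_le_integrable) auto
  then show False
    using integrable_not_eventually_ge[OF g_integrable g_nonneg, of 1] by simp
qed

lemma flux_not_eventually_ge_at_bot:
  assumes c: "0 < c"
  shows "\<not> eventually (\<lambda>x. c \<le> cmod (flux x)) at_bot"
proof
  have reflect: "((\<lambda>x. f (- x)) has_vector_derivative - f' (- x)) (at x)"
    if "\<And>x. (f has_vector_derivative f' x) (at x)" for f f' :: "real \<Rightarrow> complex" and x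
  proof -
    have "((f \<circ> uminus) has_vector_derivative (-1) *\<^sub>R f' (- x)) (at x)"
      by (rule vector_diff_chain_at) (auto intro!: derivative_eq_intros that
          simp: has_real_derivative_iff_has_vector_derivative[symmetric])
    then show ?thesis
      by (simp add: o_def)
  qed
  interpret reflected_W: superpotential "\<lambda>x. - W (- x)" "\<lambda>x. W' (- x)" M
  proof
    show "((\<lambda>x. - W (- x)) has_real_derivative W' (- x)) (at x)" for x
      using DERIV_minus[OF DERIV_chain2[where g = uminus, OF W_deriv DERIV_minus[OF DERIV_ident]]]
      by simp
    show "\<bar>- W (- x)\<bar> \<le> M" for x
      using W_bounded[of "- x"] by simp
  qed
  interpret reflected: superpotential_eigenfunction "\<lambda>x. - W (- x)" "\<lambda>x. W' (- x)" M
    E "\<lambda>x. u (- x)" "\<lambda>x. - u' (- x)" "\<lambda>x. u'' (- x)"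
  proof
    show "((\<lambda>x. u (- x)) has_vector_derivative - u' (- x)) (at x)" for x
      by (rule reflect[OF u_deriv])
    show "((\<lambda>x. - u' (- x)) has_vector_derivative u'' (- x)) (at x)" for x
      using has_vector_derivative_minus[OF reflect[OF u'_deriv, of x]] by simp
    show "- u'' (- x) + of_real (reflected_W.potential x) * u (- x) = E * u (- x)" for x
      using eigen_eq[of "- x"] by (simp add: reflected_W.potential_def potential_def)
    show "integrable lborel (\<lambda>x. (cmod (u (- x)))\<^sup>2)"
      using lborel_integrable_real_affine_iff[of "-1" "\<lambda>x. (cmod (u x))\<^sup>2" 0] u_L2 by simp
  qed
  have "cmod (reflected.flux x) = cmod (flux (- x))" for x
    by (simp add: reflected.flux_def flux_def norm_mult norm_minus_commute)
  moreover assume "eventually (\<lambda>x. c \<le> cmod (flux x)) at_bot"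
  then obtain b where "\<And>x. x \<le> b \<Longrightarrow> c \<le> cmod (flux x)"
    by (auto simp: eventually_at_bot_linorder)
  ultimately have "eventually (\<lambda>x. c \<le> cmod (reflected.flux x)) at_top"
    unfolding eventually_at_top_linorder by (metis minus_le_iff)
  then show False
    using reflected.flux_not_eventually_ge_at_top[OF c] by blast
qed

lemma mono_below_flux_eq_0:
  assumes mono: "mono \<tau>" and below: "\<And>x. \<bar>\<tau> x\<bar> \<le> cmod (flux x)"
  shows "\<tau> x = 0"
proof (rule ccontr)
  assume "\<tau> x \<noteq> 0"
  then consider "0 < \<tau> x" | "\<tau> x < 0"
    by linarith
  then show False
  proof cases
    case 1
    have "\<tau> x \<le> cmod (flux y)" if "x \<le> y" for y
    proof -
      have "\<tau> x \<le> \<tau> y"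
        using mono that by (rule monoD)
      also have "\<dots> \<le> cmod (flux y)"
        using below[of y] by simp
      finally show ?thesis .
    qed
    then have "eventually (\<lambda>y. \<tau> x \<le> cmod (flux y)) at_top"
      unfolding eventually_at_top_linorder by blast
    with 1 show False
      using flux_not_eventually_ge_at_top by blast
  next
    case 2
    have "- \<tau> x \<le> cmod (flux y)" if "y \<le> x" for y
    proof -
      have "- \<tau> x \<le> - \<tau> y"
        using mono that by (simp add: monoD)
      also have "\<dots> \<le> cmod (flux y)"
        using below[of y] by simp
      finally show ?thesis .
    qed
    then have "eventually (\<lambda>y. - \<tau> x \<le> cmod (flux y)) at_bot"
      unfolding eventually_at_bot_linorder by blast
    with 2 show False
      using flux_not_eventually_ge_at_bot[of "- \<tau> x"] by simp
  qed
qed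

lemma flux_minorant_deriv_eq_0:
  assumes \<tau>: "\<And>x. (\<tau> has_real_derivative \<tau>' x) (at x)"
    and \<tau>'_nonneg: "\<And>x. 0 \<le> \<tau>' x"
    and below: "\<And>x. \<bar>\<tau> x\<bar> \<le> cmod (flux x)"
  shows "\<tau>' x = 0"
proof -
  have mono: "mono \<tau>"
  proof (rule monoI)
    fix a b :: real
    assume "a \<le> b"
    then show "\<tau> a \<le> \<tau> b"
      using DERIV_nonneg_imp_nondecreasing[of a b \<tau>] \<tau> \<tau>'_nonneg by blast
  qed
  have "\<tau> = (\<lambda>_. 0)"
    by (rule ext) (rule mono_below_flux_eq_0[OF mono below])
  then have "(\<tau> has_real_derivative 0) (at x)"
    by (simp only: DERIV_const)
  then show ?thesis
    by (rule DERIV_unique[OF \<tau>])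
qed

lemma eigenvalue_real_nonneg:
  assumes nonzero: "u x0 \<noteq> 0"
  shows "E \<in> \<real> \<and> 0 \<le> Re E"
proof -
  define g where "g x = (cmod (u x))\<^sup>2" for x
  define q where "q x = (cmod (of_real (W x) * u x - u' x))\<^sup>2" for x
  have g_nonneg: "0 \<le> g x" and q_nonneg: "0 \<le> q x" for x
    by (simp_all add: g_def q_def)
  have g_pos: "0 < g x0"
    using nonzero by (simp add: g_def)
  have Im_flux: "((\<lambda>x. Im (flux x)) has_real_derivative Im E * g x) (at x)" for x
    using has_field_derivative_Im[OF flux_deriv[of x]] by (simp add: g_def)
  have Re_flux: "((\<lambda>x. - Re (flux x)) has_real_derivative q x - Re E * g x) (at x)" for x
    using DERIV_minus[OF has_field_derivative_Re[OF flux_deriv[of x]]] by (simp add: g_def q_def)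
  have sgn_mult_self: "sgn (Im E) * Im E = \<bar>Im E\<bar>"
    by (simp add: sgn_real_def)
  have "\<bar>Im E\<bar> * g x0 = 0"
  proof (rule flux_minorant_deriv_eq_0[where \<tau>' = "\<lambda>x. \<bar>Im E\<bar> * g x"])
    show "((\<lambda>x. sgn (Im E) * Im (flux x)) has_real_derivative \<bar>Im E\<bar> * g x) (at x)" for x
      using DERIV_cmult[OF Im_flux[of x], of "sgn (Im E)"] sgn_mult_self
      unfolding mult.assoc[symmetric] by simp
    show "\<bar>sgn (Im E) * Im (flux x)\<bar> \<le> cmod (flux x)" for x
      using abs_Im_le_cmod[of "flux x"] by (auto simp: abs_mult abs_sgn_eq)
  qed (simp add: g_def)
  then have "Im E = 0"
    using g_pos by simp
  moreover have "0 \<le> Re E"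
  proof (rule ccontr)
    assume "\<not> 0 \<le> Re E"
    then have "0 \<le> q x - Re E * g x" for x
      using mult_nonpos_nonneg[of "Re E" "g x"] g_nonneg[of x] q_nonneg[of x] by linarith
    then have "q x0 - Re E * g x0 = 0"
      using abs_Re_le_cmod by (intro flux_minorant_deriv_eq_0[OF Re_flux]) simp_all
    with \<open>\<not> 0 \<le> Re E\<close> g_pos q_nonneg[of x0] show False
      by (smt (verit) mult_neg_pos)
  qed
  ultimately show ?thesis
    by (simp add: complex_is_Real_iff)
qed

end

context superpotential
begin

lemma schrod_eigenpair_real_nonneg:
  assumes "schrod_eigenpair potential E u"
  shows "E \<in> \<real> \<and> 0 \<le> Re E"
proof -
  obtain u' u'' x0 where "L2_fun u" and "u x0 \<noteq> 0"
    and "\<And>x. (u has_vector_derivative u' x) (at x)" "\<And>x. (u' has_vector_derivative u'' x) (at x)"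
    and "\<And>x. - u'' x + of_real (potential x) * u x = E * u x"
    using assms unfolding schrod_eigenpair_def by blast
  then interpret superpotential_eigenfunction W W' M E u u' u''
    by unfold_locales (auto simp: L2_fun_def)
  show ?thesis
    using eigenvalue_real_nonneg[OF \<open>u x0 \<noteq> 0\<close>] .
qed

lemma ground_state_eigenpair:
  fixes u0 :: "real \<Rightarrow> real"
  assumes u0_deriv: "\<And>x. (u0 has_real_derivative W x * u0 x) (at x)"
    and nonzero: "u0 x0 \<noteq> 0" and u0_L2: "integrable lborel (\<lambda>x. (u0 x)\<^sup>2)"
  shows "schrod_eigenpair potential 0 (\<lambda>x. of_real (u0 x))"
  unfolding schrod_eigenpair_def
proof (intro conjI exI allI)
  have "continuous_on UNIV u0"
    using u0_deriv by (intro continuous_at_imp_continuous_on ballI DERIV_isCont) blast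
  then show "L2_fun (\<lambda>x. of_real (u0 x))"
    using u0_L2 by (auto simp: L2_fun_def intro!: borel_measurable_continuous_onI continuous_intros)
  show "complex_of_real (u0 x0) \<noteq> 0"
    using nonzero by simp
  fix x
  show "((\<lambda>x. of_real (u0 x)) has_vector_derivative of_real (W x * u0 x)) (at x)"
    by (rule has_vector_derivative_of_real[OF u0_deriv])
  have "((\<lambda>x. W x * u0 x) has_real_derivative potential x * u0 x) (at x)"
    using DERIV_mult[OF W_deriv u0_deriv] by (simp add: potential_def algebra_simps power2_eq_square)
  then show "((\<lambda>x. of_real (W x * u0 x)) has_vector_derivative of_real (potential x * u0 x)) (at x)"
    by (rule has_vector_derivative_of_real)
  show "- of_real (potential x * u0 x) + of_real (potential x) * of_real (u0 x) = 0 * complex_of_real (u0 x)"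
    by simp
qed

lemma adjoint_zero_mode_eq_0:
  fixes u0 :: "real \<Rightarrow> real" and v :: "real \<Rightarrow> complex"
  assumes u0_deriv: "\<And>x. (u0 has_real_derivative W x * u0 x) (at x)"
    and u0_pos: "\<And>x. 0 < u0 x" and u0_le: "\<And>x. u0 x \<le> B"
    and v_deriv: "\<And>x. (v has_vector_derivative - of_real (W x) * v x) (at x)"
    and v_L2: "L2_fun v"
  shows "v x = 0"
proof (rule ccontr)
  assume v_nonzero: "v x \<noteq> 0"
  have "((\<lambda>y. v y * of_real (u0 y)) has_derivative (\<lambda>_. 0)) (at y)" for y
  proof -
    have "((\<lambda>y. v y * of_real (u0 y)) has_vector_derivative
        v y * of_real (W y * u0 y) + - of_real (W y) * v y * of_real (u0 y)) (at y)"
      by (intro has_vector_derivative_mult v_deriv has_vector_derivative_of_real u0_deriv)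
    then show ?thesis
      by (simp add: has_vector_derivative_def algebra_simps)
  qed
  then obtain C where C: "\<And>y. v y * of_real (u0 y) = C"
    using has_derivative_zero_constant[of UNIV "\<lambda>y. v y * of_real (u0 y)"] by auto
  have B_pos: "0 < B"
    using u0_pos[of 0] u0_le[of 0] by simp
  have "(cmod C / B)\<^sup>2 \<le> (cmod (v y))\<^sup>2" for y
  proof -
    have "cmod C = cmod (v y) * u0 y"
      using C[of y] u0_pos[of y] by (auto simp: norm_mult)
    also have "\<dots> \<le> cmod (v y) * B"
      using u0_le[of y] by (simp add: mult_left_mono)
    finally show ?thesis
      using B_pos by (simp add: divide_le_eq power_mono)
  qed
  moreover have "0 < (cmod C / B)\<^sup>2"
    using C[of x] v_nonzero u0_pos[of x] B_pos by auto
  ultimately show False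
    using integrable_not_eventually_ge[of "\<lambda>y. (cmod (v y))\<^sup>2" "(cmod C / B)\<^sup>2"] v_L2
    by (auto simp: L2_fun_def integrable_on_lborel)
qed

lemma dirac_first_component_eigenpair:
  fixes u0 :: "real \<Rightarrow> real" and U V U' V' :: "real \<Rightarrow> complex" and lam :: complex
  assumes u0_deriv: "\<And>x. (u0 has_real_derivative W x * u0 x) (at x)"
    and u0_pos: "\<And>x. 0 < u0 x" and u0_le: "\<And>x. u0 x \<le> B"
    and U_deriv: "\<And>x. (U has_vector_derivative U' x) (at x)"
    and V_deriv: "\<And>x. (V has_vector_derivative V' x) (at x)"
    and U'_eq: "\<And>x. U' x = of_real (W x) * U x + lam * V x"
    and V'_eq: "\<And>x. V' x = lam * U x - of_real (W x) * V x"
    and L2: "L2_fun U" "L2_fun V" and nonzero: "\<exists>x. U x \<noteq> 0 \<or> V x \<noteq> 0"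
  shows "schrod_eigenpair potential (- lam\<^sup>2) U"
proof -
  have "\<exists>x. U x \<noteq> 0"
  proof (rule ccontr)
    assume "\<nexists>x. U x \<noteq> 0"
    then have U_0: "U = (\<lambda>_. 0)"
      by auto
    then have "U' x = 0" for x
      using vector_derivative_unique_at[OF U_deriv[of x]] by auto
    then have "lam * V x = 0" for x
      using U'_eq[of x] U_0 by simp
    moreover obtain x0 where "V x0 \<noteq> 0"
      using nonzero U_0 by auto
    ultimately have "lam = 0"
      by (metis mult_eq_0_iff)
    then have "(V has_vector_derivative - of_real (W x) * V x) (at x)" for x
      using V_deriv[of x] V'_eq[of x] by simp
    then have "V x0 = 0"
      using adjoint_zero_mode_eq_0[OF u0_deriv u0_pos u0_le _ L2(2)] by blast
    with \<open>V x0 \<noteq> 0\<close> show False ..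
  qed
  moreover have "(U' has_vector_derivative
      of_real (W x) * U' x + of_real (W' x) * U x + lam * V' x) (at x)" for x
  proof -
    have U'_fun: "U' = (\<lambda>x. of_real (W x) * U x + lam * V x)"
      using U'_eq by auto
    have "((\<lambda>x. of_real (W x) * U x + lam * V x) has_vector_derivative
        of_real (W x) * U' x + of_real (W' x) * U x + lam * V' x) (at x)"
      by (intro has_vector_derivative_add has_vector_derivative_mult has_vector_derivative_of_real
          has_vector_derivative_mult_right W_deriv U_deriv V_deriv)
    from this[unfolded U'_fun] show ?thesis
      unfolding U'_fun .
  qed
  moreover have "- (of_real (W x) * U' x + of_real (W' x) * U x + lam * V' x)
      + of_real (potential x) * U x = - lam\<^sup>2 * U x" for x
    unfolding U'_eq V'_eq potential_def by (simp add: algebra_simps power2_eq_square)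
  ultimately show ?thesis
    using L2(1) U_deriv unfolding schrod_eigenpair_def
    by (intro conjI exI[of _ U'] exI[of _ "\<lambda>x. of_real (W x) * U' x + of_real (W' x) * U x + lam * V' x"])
      auto
qed

end

locale front =
  fixes N N' r0 :: "real \<Rightarrow> real"
  assumes N_smooth: "smooth_on_real {0..} N"
    and N'_deriv: "\<And>s. s \<ge> 0 \<Longrightarrow> (N has_real_derivative N' s) (at s within {0..})"
    and N'_neg: "\<And>s. s > 0 \<Longrightarrow> N' s < 0"
    and N0: "N 0 = 1"
    and N1: "N 1 = 0"
    and r0_ode: "\<And>x. (r0 has_real_derivative r0 x * N ((r0 x)\<^sup>2)) (at x)"
    and r0_init: "0 < r0 0" "r0 0 < 1"
begin

lemma N_continuous: "continuous_on {0..} N"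
  by (rule DERIV_continuous_on[of _ _ N']) (use N'_deriv in auto)

lemma N_deriv_at: "0 < s \<Longrightarrow> (N has_real_derivative N' s) (at s)"
  using N'_deriv[of s] at_within_interior[of s "{0..}"] by simp

lemma N_strict_decreasing:
  assumes "0 \<le> a" "a < b"
  shows "N b < N a"
  by (rule DERIV_neg_imp_decreasing_open[OF assms(2)])
    (use assms in \<open>auto intro!: continuous_on_subset[OF N_continuous] exI[of _ "N' _"]
        N_deriv_at N'_neg\<close>)

lemma N_pos: "0 \<le> s \<Longrightarrow> s < 1 \<Longrightarrow> 0 < N s"
  using N_strict_decreasing[of s 1] N1 by simp

lemma N_le_1: "0 \<le> s \<Longrightarrow> N s \<le> 1"
  using N_strict_decreasing[of 0 s] N0 by (cases "s = 0") auto

lemma N'_continuous_deriv: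
  obtains N'' where "continuous_on {0..} N'"
    and "\<And>s. 0 < s \<Longrightarrow> (N' has_real_derivative N'' s) (at s)"
proof -
  obtain D where D0: "D 0 = N'"
    and D: "\<And>k s. 0 \<le> s \<Longrightarrow> (D k has_real_derivative D (Suc k) s) (at s within {0..})"
    using smooth_on_real_deriv[OF N_smooth N'_deriv] unfolding smooth_on_real_def by auto
  have "continuous_on {0..} N'"
    using D[of _ 0] unfolding D0 by (intro DERIV_continuous_on) auto
  moreover have "(N' has_real_derivative D 1 s) (at s)" if "0 < s" for s
    using D[of s 0] at_within_interior[of s "{0..}"] that unfolding D0 by simp
  ultimately show ?thesis
    using that by blast
qed

lemma r0_continuous: "continuous_on UNIV r0"
  by (intro continuous_at_imp_continuous_on ballI DERIV_isCont[OF r0_ode])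

lemma r0_pos: "0 < r0 x"
proof (rule linear_ode_pos[of r0 "\<lambda>x. N ((r0 x)\<^sup>2)"])
  show "continuous_on UNIV (\<lambda>x. N ((r0 x)\<^sup>2))"
    by (rule continuous_on_compose2[OF N_continuous, of UNIV "\<lambda>x. (r0 x)\<^sup>2"])
      (auto intro!: continuous_intros r0_continuous)
qed (use r0_ode r0_init in \<open>auto simp: mult.commute\<close>)

lemma r0_sq_deriv: "((\<lambda>x. (r0 x)\<^sup>2) has_real_derivative 2 * (r0 x)\<^sup>2 * N ((r0 x)\<^sup>2)) (at x)"
  using DERIV_power[OF r0_ode, of 2 x] by (simp add: power2_eq_square algebra_simps)

lemma r0_lt_1: "r0 x < 1"
proof -
  \<comment> \<open>As N 1 = 0, 1 - r0^2 solves a linear equation; its coefficient involves the slope Q of N at 1.\<close>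
  define Q where "Q s = (if s = 1 then N' 1 else (N s - N 1) / (s - 1))" for s
  have "continuous_on {0..} Q"
    unfolding Q_def using N_continuous N'_deriv[of 1] by (rule continuous_on_difference_quotient) simp
  then have Q_cont: "continuous_on UNIV (\<lambda>x. 2 * (r0 x)\<^sup>2 * Q ((r0 x)\<^sup>2))"
    by (intro continuous_intros r0_continuous continuous_on_compose2[of "{0..}" Q UNIV "\<lambda>x. (r0 x)\<^sup>2"])
      auto
  have N_eq: "N s = Q s * (s - 1)" for s
    using N1 by (simp add: Q_def)
  then have deriv: "((\<lambda>x. 1 - (r0 x)\<^sup>2) has_real_derivative
      2 * (r0 x)\<^sup>2 * Q ((r0 x)\<^sup>2) * (1 - (r0 x)\<^sup>2)) (at x)" for x
    using DERIV_diff[OF DERIV_const r0_sq_deriv, of 1 x] unfolding N_eq by (simp add: algebra_simps)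
  have "0 < 1 - (r0 x)\<^sup>2"
    by (rule linear_ode_pos[OF deriv Q_cont, of 0]) (use r0_init in \<open>simp add: power_less_one_iff\<close>)
  then show ?thesis
    using r0_pos[of x] by (smt (verit) one_le_power)
qed

lemma r0_sq_bounds: "0 < (r0 x)\<^sup>2" "(r0 x)\<^sup>2 < 1"
  using r0_pos[of x] r0_lt_1[of x] by (simp_all add: power_less_one_iff)

definition W :: "real \<Rightarrow> real"
  where "W x = N ((r0 x)\<^sup>2) + N' ((r0 x)\<^sup>2) * (r0 x)\<^sup>2"

lemma W_superpotential:
  obtains W' M where "superpotential W W' M"
proof -
  obtain N'' where N'_cont: "continuous_on {0..} N'"
    and N''_deriv: "\<And>s. 0 < s \<Longrightarrow> (N' has_real_derivative N'' s) (at s)"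
    using N'_continuous_deriv by blast
  have "compact (N' ` {0..1})"
    by (rule compact_continuous_image[OF continuous_on_subset[OF N'_cont]]) auto
  then obtain B where "\<forall>y \<in> N' ` {0..1}. norm y \<le> B"
    using compact_imp_bounded bounded_iff by metis
  then have B: "\<And>s. s \<in> {0..1} \<Longrightarrow> \<bar>N' s\<bar> \<le> B"
    by auto
  define s where "s x = (r0 x)\<^sup>2" for x
  define s' where "s' x = 2 * (r0 x)\<^sup>2 * N ((r0 x)\<^sup>2)" for x
  have s_deriv: "(s has_real_derivative s' x) (at x)" for x
    unfolding s_def[abs_def] s'_def by (rule r0_sq_deriv)
  have W_deriv: "(W has_real_derivative N' (s x) * s' x + (N'' (s x) * s' x * s x + s' x * N' (s x))) (at x)"
    for x
    unfolding W_def[abs_def] s_def[symmetric]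
    by (intro DERIV_add DERIV_mult DERIV_chain2[OF N_deriv_at s_deriv]
        DERIV_chain2[OF N''_deriv s_deriv] s_deriv) (simp_all add: s_def less_imp_neq[OF r0_pos, symmetric])
  have W_bounded: "\<bar>W x\<bar> \<le> 1 + B" for x
  proof -
    have "\<bar>N' (s x) * s x\<bar> \<le> B * 1"
      unfolding abs_mult using B[of "s x"] r0_sq_bounds[of x]
      by (intro mult_mono) (auto simp: s_def)
    moreover have "0 < N (s x)" "N (s x) \<le> 1"
      using N_pos N_le_1 r0_sq_bounds[of x] by (auto simp: s_def)
    ultimately show ?thesis
      unfolding W_def s_def[symmetric] by simp
  qed
  show thesis
    by (rule that, rule superpotential.intro[OF W_deriv W_bounded])
qed

(* Since r0' = r0 N(r0^2), the ground state is sqrt (r0 r0'). *)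
definition ground_state :: "real \<Rightarrow> real"
  where "ground_state x = sqrt ((r0 x)\<^sup>2 * N ((r0 x)\<^sup>2))"

lemma r0_sq_N_pos: "0 < (r0 x)\<^sup>2 * N ((r0 x)\<^sup>2)"
  using r0_sq_bounds[of x] N_pos[of "(r0 x)\<^sup>2"] by simp

lemma ground_state_pos: "0 < ground_state x"
  using r0_sq_N_pos by (simp add: ground_state_def)

lemma ground_state_le_1: "ground_state x \<le> 1"
  using r0_sq_bounds[of x] N_le_1[of "(r0 x)\<^sup>2"] N_pos[of "(r0 x)\<^sup>2"]
    mult_le_one[of "(r0 x)\<^sup>2" "N ((r0 x)\<^sup>2)"]
  by (simp add: ground_state_def)

lemma ground_state_deriv: "(ground_state has_real_derivative W x * ground_state x) (at x)"
proof -
  define q where "q x = (r0 x)\<^sup>2 * N ((r0 x)\<^sup>2)" for x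
  have q_deriv: "(q has_real_derivative 2 * q x * W x) (at x)"
    unfolding q_def[abs_def]
    using DERIV_mult[OF r0_sq_deriv DERIV_chain2[OF N_deriv_at r0_sq_deriv]] r0_sq_bounds(1)[of x]
    by (simp add: W_def algebra_simps power2_eq_square)
  have q_pos: "0 < q x"
    unfolding q_def by (rule r0_sq_N_pos)
  have "inverse (sqrt (q x)) / 2 * (2 * q x * W x) = W x * sqrt (q x)"
    using q_pos real_sqrt_mult_self[of "q x"] by (simp add: field_simps del: real_sqrt_mult_self)
  with DERIV_chain2[OF DERIV_real_sqrt[OF q_pos] q_deriv]
  have "((\<lambda>x. sqrt (q x)) has_real_derivative W x * sqrt (q x)) (at x)"
    by (simp only:)
  then show ?thesis
    unfolding ground_state_def q_def[symmetric] .
qed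

lemma ground_state_L2: "integrable lborel (\<lambda>x. (ground_state x)\<^sup>2)"
proof (rule integrable_nonneg_deriv_of_bounded)
  have sq: "(ground_state x)\<^sup>2 = (r0 x)\<^sup>2 * N ((r0 x)\<^sup>2)" for x
    using r0_sq_N_pos[of x] by (simp add: ground_state_def)
  show "((\<lambda>x. (r0 x)\<^sup>2 / 2) has_real_derivative (ground_state x)\<^sup>2) (at x)" for x
    using DERIV_cdivide[OF r0_sq_deriv, of 2] by (simp add: sq)
  show "continuous_on UNIV (\<lambda>x. (ground_state x)\<^sup>2)"
    by (intro continuous_at_imp_continuous_on ballI continuous_intros DERIV_isCont[OF ground_state_deriv])
  show "\<bar>(r0 x)\<^sup>2 / 2\<bar> \<le> 1" for x
    using r0_sq_bounds[of x] by simp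
qed simp

end

theorem lemma8p5:
  fixes N N' r0 :: "real \<Rightarrow> real"
    and lam :: complex
    and U Vc :: "real \<Rightarrow> complex"
    and U' Vc' :: "real \<Rightarrow> complex"
  assumes N_smooth: "smooth_on_real {0..} N"
    and N'_deriv: "\<And>s. s \<ge> 0 \<Longrightarrow> (N has_real_derivative N' s) (at s within {0..})"
    and N'_neg: "\<And>s. s > 0 \<Longrightarrow> N' s < 0"
    and N0: "N 0 = 1"
    and N1: "N 1 = 0"
    and N_lim: "\<exists>L::ereal. L < 0 \<and> ((\<lambda>s. ereal (N s)) \<longlongrightarrow> L) at_top"
    and K_pos: "- N' 1 > 0"
    and r0_ode: "\<And>x. (r0 has_real_derivative r0 x * N ((r0 x)\<^sup>2)) (at x)"
    and r0_init: "r0 0 = 1/2"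
    and L2_U: "L2_fun U"
    and L2_V: "L2_fun Vc"
    and B_nonzero: "\<exists>x. U x \<noteq> 0 \<or> Vc x \<noteq> 0"
    and U_ode: "\<And>x. (U has_vector_derivative U' x) (at x)"
    and V_ode: "\<And>x. (Vc has_vector_derivative Vc' x) (at x)"
    and U_eq: "\<And>x. U' x = complex_of_real (N ((r0 x)\<^sup>2) + N' ((r0 x)\<^sup>2) * (r0 x)\<^sup>2) * U x
                        + lam * Vc x"
    and V_eq: "\<And>x. Vc' x = lam * U x
                        - complex_of_real (N ((r0 x)\<^sup>2) + N' ((r0 x)\<^sup>2) * (r0 x)\<^sup>2) * Vc x"
  shows "(let W = (\<lambda>x. N ((r0 x)\<^sup>2) + N' ((r0 x)\<^sup>2) * (r0 x)\<^sup>2);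
              Vpot = (\<lambda>x. deriv W x + (W x)\<^sup>2)
          in (- (lam\<^sup>2) \<in> \<real> \<and> schrod_eigenpair Vpot (- (lam\<^sup>2)) U)
             \<and> (schrod_eigenvalue Vpot 0 \<and>
                (\<forall>E u. schrod_eigenpair Vpot E u \<longrightarrow> E \<in> \<real> \<and> 0 \<le> Re E)))"
proof -
  interpret front N N' r0
    by (rule front.intro) (use assms in simp_all)
  obtain W' M where "superpotential W W' M"
    by (rule W_superpotential)
  then interpret superpotential W W' M .
  have W_eq: "(\<lambda>x. N ((r0 x)\<^sup>2) + N' ((r0 x)\<^sup>2) * (r0 x)\<^sup>2) = W"
    by (simp add: W_def fun_eq_iff)
  have potential_eq: "(\<lambda>x. deriv W x + (W x)\<^sup>2) = potential"
    by (simp add: deriv_W potential_def fun_eq_iff)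
  have "schrod_eigenpair potential (- lam\<^sup>2) U"
    using U_eq V_eq unfolding W_def[symmetric]
    by (intro dirac_first_component_eigenpair[OF ground_state_deriv ground_state_pos ground_state_le_1
          U_ode V_ode _ _ L2_U L2_V B_nonzero])
  moreover have "schrod_eigenvalue potential 0"
    using ground_state_eigenpair[OF ground_state_deriv _ ground_state_L2, of 0] ground_state_pos[of 0]
    unfolding schrod_eigenvalue_def by auto
  ultimately show ?thesis
    unfolding W_eq Let_def potential_eq using schrod_eigenpair_real_nonneg by blast
qed

end
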